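(* Let $(X,d)$ be a totally bounded metric space with II-modulus of total boundedness $\gamma$, $\emptyset\ne F\subseteq X$ with a representation $(\tilde F_k)$, and let $G,H:\mathbb{R}_+\to\mathbb{R}_+$ have a $G$-modulus $\alpha_G$ and an $H$-modulus $\beta_H$. Let $(x_n)$ in $X$ be uniformly $(G,H)$-Fej\'er monotone w.r.t. $F$ with modulus $\chi$ and have approximate $F$-points with approximate $F$-point bound $\Phi$. Suppose $F$ is uniformly closed with moduli $\delta_F,\omega_F$. Then for all $k\in\mathbb{N}$ and $g:\mathbb{N}\to\mathbb{N}$ there exists $N\le\tilde\Psi$ such that for all $i,j\in[N,N+g(N)]$: $d(x_i,x_j)\le\frac1{k+1}$ and $x_i\in AF_k$. Here $k_0:=\max\{k,\lceil(\omega_F(k)-1)/2\rceil\}$, $\chi_{k,\delta_F}(n,m,r):=\max\{\delta_F(k),\chi(n,m,r)\}$, $c(n,r):=\max\{\chi_{k,\delta_F}(i,g(i),r)\mid i\le n\}$, $\Psi_0(0):=0$, $\Psi_0(n+1):=\Phi\big(c(\Psi_0(n),2\beta_H(2k_0+1)+1)\big)$, and $\tilde\Psi:=\Psi_0\big(\gamma(\alpha_G(2\beta_H(2k_0+1)+1))\big)$.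
   Context: II-modulus of total boundedness $\gamma$: for every $k$ and every sequence $(y_n)$ in $X$ there are $0\le i<j\le\gamma(k)$ with $d(y_i,y_j)\le\frac1{k+1}$. Representation: $F=\bigcap_k\tilde F_k$, $AF_k:=\bigcap_{l\le k}\tilde F_l$. $G$-modulus $\alpha_G$: $a\le\frac1{\alpha_G(k)+1}\Rightarrow G(a)\le\frac1{k+1}$ for all $k\in\mathbb{N}$, $a\in\mathbb{R}_+$. $H$-modulus $\beta_H$: $H(a)\le\frac1{\beta_H(k)+1}\Rightarrow a\le\frac1{k+1}$. Uniformly $(G,H)$-Fej\'er monotone with modulus $\chi:\mathbb{N}^3\to\mathbb{N}$: for all $r,n,m$, all $p\in AF_{\chi(n,m,r)}$ and all $l\le m$, $H(d(x_{n+l},p))<G(d(x_n,p))+\frac1{r+1}$. Approximate $F$-point bound: a nondecreasing $\Phi:\mathbb{N}\to\mathbb{N}$ with: for all $k$ there is $N\le\Phi(k)$ with $x_N\in AF_k$. $F$ is uniformly closed with moduli $\delta_F,\omega_F:\mathbb{N}\to\mathbb{N}$ if for all $k\in\mathbb{N}$ and $p,q\in X$: $q\in AF_{\delta_F(k)}$ and $d(p,q)\le\frac1{\omega_F(k)+1}$ imply $p\in AF_k$. *)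

theory Defs
  imports "HOL-Analysis.Analysis"
begin

text \<open>The metric space (X,d) is the whole carrier of a type of class metric_space, d = dist.\<close>

definition II_modulus_tb :: "('a::metric_space) itself \<Rightarrow> (nat \<Rightarrow> nat) \<Rightarrow> bool" where
  "II_modulus_tb _ \<gamma> \<longleftrightarrow>
     (\<forall>k. \<forall>y::nat \<Rightarrow> 'a. \<exists>i j. i < j \<and> j \<le> \<gamma> k \<and> dist (y i) (y j) \<le> 1 / (real k + 1))"

definition AF :: "(nat \<Rightarrow> 'a set) \<Rightarrow> nat \<Rightarrow> 'a set" where
  "AF Ft k = (\<Inter>l\<in>{..k}. Ft l)"

definition G_modulus :: "(real \<Rightarrow> real) \<Rightarrow> (nat \<Rightarrow> nat) \<Rightarrow> bool" where
  "G_modulus G \<alpha> \<longleftrightarrow>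
     (\<forall>k. \<forall>a::real. 0 \<le> a \<longrightarrow> a \<le> 1 / (real (\<alpha> k) + 1) \<longrightarrow> G a \<le> 1 / (real k + 1))"

definition H_modulus :: "(real \<Rightarrow> real) \<Rightarrow> (nat \<Rightarrow> nat) \<Rightarrow> bool" where
  "H_modulus H \<beta> \<longleftrightarrow>
     (\<forall>k. \<forall>a::real. 0 \<le> a \<longrightarrow> H a \<le> 1 / (real (\<beta> k) + 1) \<longrightarrow> a \<le> 1 / (real k + 1))"

definition unif_GH_fejer ::
  "(real \<Rightarrow> real) \<Rightarrow> (real \<Rightarrow> real) \<Rightarrow> (nat \<Rightarrow> 'a::metric_space set) \<Rightarrow> (nat \<Rightarrow> 'a)
     \<Rightarrow> (nat \<Rightarrow> nat \<Rightarrow> nat \<Rightarrow> nat) \<Rightarrow> bool" where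
  "unif_GH_fejer G H Ft x chi \<longleftrightarrow>
     (\<forall>r n m. \<forall>p \<in> AF Ft (chi n m r). \<forall>l\<le>m.
        H (dist (x (n + l)) p) < G (dist (x n) p) + 1 / (real r + 1))"

definition approx_F_point_bound :: "(nat \<Rightarrow> 'a set) \<Rightarrow> (nat \<Rightarrow> 'a) \<Rightarrow> (nat \<Rightarrow> nat) \<Rightarrow> bool" where
  "approx_F_point_bound Ft x \<Phi> \<longleftrightarrow> mono \<Phi> \<and> (\<forall>k. \<exists>N\<le>\<Phi> k. x N \<in> AF Ft k)"

definition uniformly_closed :: "(nat \<Rightarrow> 'a::metric_space set) \<Rightarrow> (nat \<Rightarrow> nat) \<Rightarrow> (nat \<Rightarrow> nat) \<Rightarrow> bool" where
  "uniformly_closed Ft \<delta> \<omega> \<longleftrightarrow>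
     (\<forall>k p q. q \<in> AF Ft (\<delta> k) \<longrightarrow> dist p q \<le> 1 / (real (\<omega> k) + 1) \<longrightarrow> p \<in> AF Ft k)"

definition k0 :: "nat \<Rightarrow> (nat \<Rightarrow> nat) \<Rightarrow> nat" where
  "k0 k \<omega> = max k (nat \<lceil>(real (\<omega> k) - 1) / 2\<rceil>)"

definition chi_kdelta :: "(nat \<Rightarrow> nat \<Rightarrow> nat \<Rightarrow> nat) \<Rightarrow> nat \<Rightarrow> (nat \<Rightarrow> nat) \<Rightarrow> nat \<Rightarrow> nat \<Rightarrow> nat \<Rightarrow> nat" where
  "chi_kdelta chi k \<delta> n m r = max (\<delta> k) (chi n m r)"

definition c_fun :: "(nat \<Rightarrow> nat \<Rightarrow> nat \<Rightarrow> nat) \<Rightarrow> nat \<Rightarrow> (nat \<Rightarrow> nat) \<Rightarrow> (nat \<Rightarrow> nat) \<Rightarrow> nat \<Rightarrow> nat \<Rightarrow> nat" where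
  "c_fun chi k \<delta> g n r = Max {chi_kdelta chi k \<delta> i (g i) r | i. i \<le> n}"

primrec Psi0 :: "(nat \<Rightarrow> nat) \<Rightarrow> (nat \<Rightarrow> nat \<Rightarrow> nat) \<Rightarrow> nat \<Rightarrow> nat \<Rightarrow> nat" where
  "Psi0 \<Phi> c r 0 = 0"
| "Psi0 \<Phi> c r (Suc n) = \<Phi> (c (Psi0 \<Phi> c r n) r)"

definition Psi_tilde ::
  "nat \<Rightarrow> (nat \<Rightarrow> nat) \<Rightarrow> (nat \<Rightarrow> nat) \<Rightarrow> (nat \<Rightarrow> nat) \<Rightarrow> (nat \<Rightarrow> nat) \<Rightarrow> (nat \<Rightarrow> nat)
     \<Rightarrow> (nat \<Rightarrow> nat \<Rightarrow> nat \<Rightarrow> nat) \<Rightarrow> (nat \<Rightarrow> nat) \<Rightarrow> (nat \<Rightarrow> nat) \<Rightarrow> nat" where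
  "Psi_tilde k g \<gamma> \<alpha> \<beta> \<Phi> chi \<delta> \<omega> =
     (let r = 2 * \<beta> (2 * k0 k \<omega> + 1) + 1
      in Psi0 \<Phi> (c_fun chi k \<delta> g) r (\<gamma> (\<alpha> r)))"

end

theory Submission
  imports Defs
begin

text \<open>Choose points \<open>x (N n)\<close> with \<open>N 0 = 0\<close> and \<open>x (N (n+1))\<close> an approximate F-point of
  precision \<open>c(\<Psi>\<^sub>0 n, r)\<close>. Total boundedness gives \<open>i < j \<le> \<gamma>(\<alpha>\<^sub>G r)\<close> with
  \<open>x (N i)\<close> close to \<open>p = x (N j)\<close>. Since \<open>N i \<le> \<Psi>\<^sub>0 (j-1)\<close>, the point \<open>p\<close> is precise enough
  for the Fej\'er inequality on \<open>[N i, N i + g (N i)]\<close>, which keeps the whole window within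
  \<open>1/(2k\<^sub>0+2)\<close> of \<open>p\<close>. The triangle inequality and uniform closedness of F then give
  both conclusions.\<close>

lemma AF_antimono: "l \<le> k \<Longrightarrow> AF Ft k \<subseteq> AF Ft l"
  unfolding AF_def by auto

lemma c_fun_image: "c_fun chi k \<delta> g n r = Max ((\<lambda>i. chi_kdelta chi k \<delta> i (g i) r) ` {..n})"
  unfolding c_fun_def by (rule arg_cong[where f = Max]) auto

lemma c_fun_ge: "i \<le> n \<Longrightarrow> chi_kdelta chi k \<delta> i (g i) r \<le> c_fun chi k \<delta> g n r"
  unfolding c_fun_image by (rule Max_ge) auto

lemma c_fun_mono: "n \<le> m \<Longrightarrow> c_fun chi k \<delta> g n r \<le> c_fun chi k \<delta> g m r"
  unfolding c_fun_image by (rule Max_mono) auto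

lemma AF_c_fun_subset:
  assumes "i \<le> n"
  shows "AF Ft (c_fun chi k \<delta> g n r) \<subseteq> AF Ft (chi i (g i) r) \<inter> AF Ft (\<delta> k)"
  using c_fun_ge[OF assms, of chi k \<delta> g r] AF_antimono[of _ "c_fun chi k \<delta> g n r" Ft]
  unfolding chi_kdelta_def by auto

lemma Psi0_mono:
  assumes "mono \<Phi>" and "\<And>n m. n \<le> m \<Longrightarrow> c n r \<le> c m r" and "n \<le> m"
  shows "Psi0 \<Phi> c r n \<le> Psi0 \<Phi> c r m"
proof -
  have "Psi0 \<Phi> c r n \<le> Psi0 \<Phi> c r (Suc n)" for n
  proof (induction n)
    case 0
    show ?case by simp
  next
    case (Suc n)
    then show ?case using assms(1,2) by (simp add: monoD)
  qed
  then show ?thesis using assms(3) by (rule lift_Suc_mono_le)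
qed

lemma approx_F_points_along_Psi0:
  assumes "approx_F_point_bound Ft x \<Phi>"
  obtains N where "\<And>n. N n \<le> Psi0 \<Phi> c r n"
    and "\<And>n. x (N (Suc n)) \<in> AF Ft (c (Psi0 \<Phi> c r n) r)"
proof -
  obtain A where A: "\<And>l. A l \<le> \<Phi> l \<and> x (A l) \<in> AF Ft l"
    using assms unfolding approx_F_point_bound_def by metis
  define N where "N n = (case n of 0 \<Rightarrow> 0 | Suc m \<Rightarrow> A (c (Psi0 \<Phi> c r m) r))" for n
  have "N n \<le> Psi0 \<Phi> c r n" for n
    using A by (cases n) (auto simp: N_def)
  moreover have "x (N (Suc n)) \<in> AF Ft (c (Psi0 \<Phi> c r n) r)" for n
    using A by (simp add: N_def)
  ultimately show thesis
    by (rule that)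
qed

lemma k0_bounds: "k \<le> k0 k \<omega>" "\<omega> k \<le> 2 * k0 k \<omega> + 1"
proof -
  have "(real (\<omega> k) - 1) / 2 \<le> real (nat \<lceil>(real (\<omega> k) - 1) / 2\<rceil>)"
    by linarith
  also have "\<dots> \<le> real (k0 k \<omega>)"
    unfolding k0_def by simp
  finally have "real (\<omega> k) \<le> real (2 * k0 k \<omega> + 1)"
    by simp
  then show "\<omega> k \<le> 2 * k0 k \<omega> + 1"
    by (simp only: of_nat_le_iff)
  show "k \<le> k0 k \<omega>"
    unfolding k0_def by simp
qed

lemma fejer_window_close:
  assumes fejer: "unif_GH_fejer G H Ft x chi"
    and G_mod: "G_modulus G \<alpha>" and H_mod: "H_modulus H \<beta>"
    and p: "p \<in> AF Ft (chi n m (2 * \<beta> K + 1))"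
    and close: "dist (x n) p \<le> 1 / (real (\<alpha> (2 * \<beta> K + 1)) + 1)"
    and "l \<le> m"
  shows "dist (x (n + l)) p \<le> 1 / (real K + 1)"
proof -
  define r where "r = 2 * \<beta> K + 1"
  have "G (dist (x n) p) \<le> 1 / (real r + 1)"
    using G_mod close unfolding G_modulus_def r_def by (simp del: of_nat_Suc)
  moreover have "H (dist (x (n + l)) p) < G (dist (x n) p) + 1 / (real r + 1)"
    using fejer p \<open>l \<le> m\<close> unfolding unif_GH_fejer_def r_def by blast
  ultimately have "H (dist (x (n + l)) p) \<le> 2 / (real r + 1)"
    by simp
  also have "\<dots> = 1 / (real (\<beta> K) + 1)"
    unfolding r_def by (simp add: field_simps)
  finally show ?thesis
    using H_mod unfolding H_modulus_def by simp
qed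

lemma metastable_near_point:
  fixes x :: "nat \<Rightarrow> 'a::metric_space"
  assumes uclosed: "uniformly_closed Ft \<delta> \<omega>" and p: "p \<in> AF Ft (\<delta> k)"
    and "k \<le> K" and "\<omega> k \<le> 2 * K + 1"
    and close: "\<And>l. l \<le> m \<Longrightarrow> dist (x (N + l)) p \<le> 1 / (real (2 * K + 1) + 1)"
    and i: "N \<le> i" "i \<le> N + m" and j: "N \<le> j" "j \<le> N + m"
  shows "dist (x i) (x j) \<le> 1 / (real k + 1) \<and> x i \<in> AF Ft k"
proof
  have di: "dist (x i) p \<le> 1 / (real (2 * K + 1) + 1)"
    using close[of "i - N"] i by simp
  have dj: "dist (x j) p \<le> 1 / (real (2 * K + 1) + 1)"
    using close[of "j - N"] j by simp
  have "dist (x i) (x j) \<le> dist (x i) p + dist (x j) p"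
    by (rule dist_triangle2)
  also have "\<dots> \<le> 2 / (real (2 * K + 1) + 1)"
    using di dj by simp
  also have "\<dots> = 1 / (real K + 1)"
    by (simp add: field_simps)
  also have "\<dots> \<le> 1 / (real k + 1)"
    using \<open>k \<le> K\<close> by (intro divide_left_mono) auto
  finally show "dist (x i) (x j) \<le> 1 / (real k + 1)" .
  have "1 / (real (2 * K + 1) + 1) \<le> 1 / (real (\<omega> k) + 1)"
    using \<open>\<omega> k \<le> 2 * K + 1\<close> by (intro divide_left_mono) auto
  with di have "dist (x i) p \<le> 1 / (real (\<omega> k) + 1)"
    by linarith
  with uclosed p show "x i \<in> AF Ft k"
    unfolding uniformly_closed_def by blast
qed

theorem theorem5p3:
  fixes x :: "nat \<Rightarrow> 'a::metric_space"
    and F :: "'a set" and Ft :: "nat \<Rightarrow> 'a set"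
    and G H :: "real \<Rightarrow> real"
    and \<gamma> \<alpha> \<beta> \<Phi> \<delta> \<omega> :: "nat \<Rightarrow> nat"
    and chi :: "nat \<Rightarrow> nat \<Rightarrow> nat \<Rightarrow> nat"
  assumes tb: "II_modulus_tb TYPE('a) \<gamma>"
    and F_ne: "F \<noteq> {}"
    and F_rep: "F = (\<Inter>k. Ft k)"
    and G_nonneg: "\<forall>a\<ge>0. G a \<ge> 0"
    and H_nonneg: "\<forall>a\<ge>0. H a \<ge> 0"
    and G_mod: "G_modulus G \<alpha>"
    and H_mod: "H_modulus H \<beta>"
    and fejer: "unif_GH_fejer G H Ft x chi"
    and approx: "approx_F_point_bound Ft x \<Phi>"
    and uclosed: "uniformly_closed Ft \<delta> \<omega>"
  shows "\<forall>k (g :: nat \<Rightarrow> nat). \<exists>N \<le> Psi_tilde k g \<gamma> \<alpha> \<beta> \<Phi> chi \<delta> \<omega>.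
           \<forall>i j. N \<le> i \<and> i \<le> N + g N \<and> N \<le> j \<and> j \<le> N + g N \<longrightarrow>
             dist (x i) (x j) \<le> 1 / (real k + 1) \<and> x i \<in> AF Ft k"
proof (intro allI)
  fix k and g :: "nat \<Rightarrow> nat"
  define K where "K = 2 * k0 k \<omega> + 1"
  define r where "r = 2 * \<beta> K + 1"
  define P where "P = Psi0 \<Phi> (c_fun chi k \<delta> g) r"
  have P_mono: "n \<le> m \<Longrightarrow> P n \<le> P m" for n m
    using approx c_fun_mono unfolding P_def approx_F_point_bound_def by (blast intro: Psi0_mono)
  obtain N where N_le: "\<And>n. N n \<le> P n"
    and N_approx: "\<And>n. x (N (Suc n)) \<in> AF Ft (c_fun chi k \<delta> g (P n) r)"
    using approx_F_points_along_Psi0[OF approx, where c = "c_fun chi k \<delta> g" and r = r]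
    unfolding P_def by metis
  obtain i j where ij: "i < j" "j \<le> \<gamma> (\<alpha> r)"
    and dist_ij: "dist (x (N i)) (x (N j)) \<le> 1 / (real (\<alpha> r) + 1)"
    using tb[unfolded II_modulus_tb_def, rule_format, of "\<alpha> r" "\<lambda>n. x (N n)"] by blast
  then obtain j' where j': "j = Suc j'"
    by (cases j) auto
  then have "N i \<le> P j'"
    using N_le[of i] P_mono[of i j'] ij by simp
  then have p: "x (N j) \<in> AF Ft (chi (N i) (g (N i)) r) \<inter> AF Ft (\<delta> k)"
    using AF_c_fun_subset[of _ "P j'" Ft chi k \<delta> g r] N_approx[of j'] j' by blast
  have close: "dist (x (N i + l)) (x (N j)) \<le> 1 / (real K + 1)" if "l \<le> g (N i)" for l
    using fejer_window_close[OF fejer G_mod H_mod IntD1[OF p, unfolded r_def]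
        dist_ij[unfolded r_def] that] .
  have "dist (x a) (x b) \<le> 1 / (real k + 1) \<and> x a \<in> AF Ft k"
    if "N i \<le> a" "a \<le> N i + g (N i)" "N i \<le> b" "b \<le> N i + g (N i)" for a b
    by (rule metastable_near_point[where x = x and N = "N i", OF uclosed IntD2[OF p]
          k0_bounds close[unfolded K_def] that])
  moreover have "N i \<le> Psi_tilde k g \<gamma> \<alpha> \<beta> \<Phi> chi \<delta> \<omega>"
    using N_le[of i] P_mono[of i "\<gamma> (\<alpha> r)"] ij
    unfolding Psi_tilde_def P_def r_def K_def Let_def by simp
  ultimately show "\<exists>N \<le> Psi_tilde k g \<gamma> \<alpha> \<beta> \<Phi> chi \<delta> \<omega>.
      \<forall>i j. N \<le> i \<and> i \<le> N + g N \<and> N \<le> j \<and> j \<le> N + g N \<longrightarrow>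
        dist (x i) (x j) \<le> 1 / (real k + 1) \<and> x i \<in> AF Ft k"
    by blast
qed

end
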